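(* Let $R$ be a $*$-ring with unity and $a,b,c\in R$. Then: (1) $a\perp a$ implies $a=0$. (2) $a\perp b$ iff $b\perp a$ iff $a\perp(-b)$. (3) If $a\perp b$ and $c\leq a$, then $c\perp b$. (4) $a\perp b$ iff $a\leq a-b$. (5) If $a\leq b$, then $b-a\leq b$ and $b-a\perp a$. (6) If $a\perp b$, then the only common lower bound of $a$ and $b$ is $0$ (so $a\wedge b=0$), and $a+b$ is an upper bound of both $a$ and $b$. (7) If $a\perp b$ and $(a+b)\perp c$, then $a\perp(b+c)$.
   Context: Natural partial order: $a\leq b$ iff there is $x\in R$ with $a=xa=xb=ax^*=bx^*$. Orthogonality: $a\perp b$ iff there exists $x\in R$ with $xa=a=ax^*$ and $xb=0=bx^*$. *)

theory Defs
  imports Main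
begin

class star_ring = ring_1 +
  fixes star :: "'a \<Rightarrow> 'a"
  assumes star_star: "star (star x) = x"
    and star_add: "star (x + y) = star x + star y"
    and star_mult: "star (x * y) = star y * star x"

definition star_le :: "'a::star_ring \<Rightarrow> 'a \<Rightarrow> bool" where
  "star_le a b \<longleftrightarrow> (\<exists>x. a = x * a \<and> a = x * b \<and> a = a * star x \<and> a = b * star x)"

definition star_orth :: "'a::star_ring \<Rightarrow> 'a \<Rightarrow> bool" where
  "star_orth a b \<longleftrightarrow> (\<exists>x. x * a = a \<and> a * star x = a \<and> x * b = 0 \<and> b * star x = 0)"

end

theory Submission
  imports Defs
begin

text \<open>The recurring facts are that
  \<open>1 - x\<close> exchanges the roles of the two elements in a witness for \<open>a \<perp> b\<close>, and that a
  left (right) unit of \<open>b\<close> is also one for every \<open>a \<le> b\<close>, because \<open>a\<close> has the forms \<open>y\<cdot>b\<close> and \<open>b\<cdot>y\<^sup>*\<close>.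
  For (7) the product of a witness for \<open>a \<perp> b\<close> with one for \<open>(a + b) \<perp> c\<close> works,
  since \<open>a\<close> and \<open>b\<close> lie below \<open>a + b\<close>.\<close>

lemma star_one [simp]: "star (1::'a::star_ring) = 1"
  by (metis mult_1_left mult_1_right star_mult star_star)

lemma star_diff: "star (x - y) = star x - star (y::'a::star_ring)"
  by (metis star_add diff_add_cancel add_diff_cancel_right')

lemma star_zero [simp]: "star (0::'a::star_ring) = 0"
  by (metis add_cancel_right_right star_add)

lemma star_le_zero: "star_le 0 (a::'a::star_ring)"
  unfolding star_le_def by (rule exI[of _ 0]) simp

lemma star_le_left_unit:
  assumes "star_le a b" and "x * b = (b::'a::star_ring)"
  shows "x * a = a"
proof -
  obtain y where "a = b * star y" using assms(1) unfolding star_le_def by blast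
  then show ?thesis using assms(2) by (metis mult.assoc)
qed

lemma star_le_right_unit:
  assumes "star_le a b" and "b * star x = (b::'a::star_ring)"
  shows "a * star x = a"
proof -
  obtain y where "a = y * b" using assms(1) unfolding star_le_def by blast
  then show ?thesis using assms(2) by (metis mult.assoc)
qed

lemma star_orth_self_imp_zero: "star_orth a a \<Longrightarrow> a = (0::'a::star_ring)"
  unfolding star_orth_def by auto

lemma star_orth_sym: "star_orth a b \<Longrightarrow> star_orth b (a::'a::star_ring)"
  unfolding star_orth_def
proof (elim exE conjE)
  fix x assume "x * a = a" "a * star x = a" "x * b = 0" "b * star x = 0"
  then show "\<exists>y. y * b = b \<and> b * star y = b \<and> y * a = 0 \<and> a * star y = 0"
    by (intro exI[of _ "1 - x"]) (simp add: star_diff algebra_simps)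
qed

lemma star_orth_commute: "star_orth a b \<longleftrightarrow> star_orth b (a::'a::star_ring)"
  using star_orth_sym by blast

lemma star_orth_uminus_right [simp]: "star_orth a (- b) \<longleftrightarrow> star_orth a (b::'a::star_ring)"
  unfolding star_orth_def by simp

lemma star_orth_le_left: "star_orth a b \<Longrightarrow> star_le c a \<Longrightarrow> star_orth c (b::'a::star_ring)"
  unfolding star_orth_def by (metis star_le_left_unit star_le_right_unit)

lemma star_orth_iff_le_diff: "star_orth a b \<longleftrightarrow> star_le a (a - (b::'a::star_ring))"
  unfolding star_orth_def star_le_def
proof (intro iffI; elim exE conjE)
  fix x assume "x * a = a" "a * star x = a" "x * b = 0" "b * star x = 0"
  then show "\<exists>x. a = x * a \<and> a = x * (a - b) \<and> a = a * star x \<and> a = (a - b) * star x"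
    by (intro exI[of _ x]) (simp add: algebra_simps)
next
  fix x assume "a = x * a" "a = x * (a - b)" "a = a * star x" "a = (a - b) * star x"
  then show "\<exists>x. x * a = a \<and> a * star x = a \<and> x * b = 0 \<and> b * star x = 0"
    by (intro exI[of _ x]) (simp add: algebra_simps)
qed

lemma star_le_add_left: "star_orth a b \<Longrightarrow> star_le a (a + (b::'a::star_ring))"
  using star_orth_iff_le_diff[of a "- b"] by simp

lemma star_le_add_right: "star_orth a b \<Longrightarrow> star_le b (a + (b::'a::star_ring))"
  using star_le_add_left[of b a] by (simp add: star_orth_commute add.commute)

lemma star_le_diff_left: "star_le a b \<Longrightarrow> star_le (b - a) (b::'a::star_ring)"
  unfolding star_le_def
proof (elim exE conjE)
  fix x assume "a = x * a" "a = x * b" "a = a * star x" "a = b * star x"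
  then show "\<exists>y. b - a = y * (b - a) \<and> b - a = y * b \<and> b - a = (b - a) * star y
      \<and> b - a = b * star y"
    by (intro exI[of _ "1 - x"]) (simp add: star_diff algebra_simps)
qed

lemma star_orth_diff_left: "star_le a b \<Longrightarrow> star_orth (b - a) (a::'a::star_ring)"
proof -
  assume "star_le a b"
  then obtain x where "a = x * a" "a = x * b" "a = a * star x" "a = b * star x"
    unfolding star_le_def by blast
  then have "star_orth a (b - a)"
    unfolding star_orth_def by (intro exI[of _ x]) (simp add: algebra_simps)
  then show ?thesis by (rule star_orth_sym)
qed

lemma star_orth_common_lower_bound:
  assumes "star_orth a b" and "star_le d a" and "star_le d b"
  shows "d = (0::'a::star_ring)"
proof -
  obtain z where z: "z * d = d" "z * b = 0"
    using star_orth_le_left[OF assms(1,2)] unfolding star_orth_def by blast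
  obtain y where "d = b * star y" using assms(3) unfolding star_le_def by blast
  then have "z * d = z * b * star y" by (simp add: mult.assoc)
  then show ?thesis using z by simp
qed

lemma star_orth_add_right:
  assumes ab: "star_orth a b" and abc: "star_orth (a + b) c"
  shows "star_orth a (b + (c::'a::star_ring))"
proof -
  obtain x where x: "x * a = a" "a * star x = a" "x * b = 0" "b * star x = 0"
    using ab unfolding star_orth_def by blast
  obtain y where y: "y * (a + b) = a + b" "(a + b) * star y = a + b" "y * c = 0" "c * star y = 0"
    using abc unfolding star_orth_def by blast
  have "star_le a (a + b)" using ab by (rule star_le_add_left)
  then have ya: "y * a = a" and ay: "a * star y = a"
    using y star_le_left_unit star_le_right_unit by blast+
  then have yb: "y * b = b" and by': "b * star y = b"
    using y(1,2) by (simp_all add: distrib_left distrib_right)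
  show ?thesis unfolding star_orth_def
  proof (intro exI[of _ "x * y"] conjI)
    show "x * y * a = a" by (simp add: mult.assoc ya x)
    show "a * star (x * y) = a" by (simp add: star_mult mult.assoc[symmetric] ay x)
    show "x * y * (b + c) = 0" by (simp add: distrib_left mult.assoc yb y x)
    show "(b + c) * star (x * y) = 0"
      by (simp add: star_mult distrib_right mult.assoc[symmetric] by' y x)
  qed
qed

theorem mainTheorem6:
  fixes a b c :: "'a::star_ring"
  shows "(star_orth a a \<longrightarrow> a = 0)
    \<and> ((star_orth a b \<longleftrightarrow> star_orth b a) \<and> (star_orth b a \<longleftrightarrow> star_orth a (- b)))
    \<and> (star_orth a b \<and> star_le c a \<longrightarrow> star_orth c b)
    \<and> (star_orth a b \<longleftrightarrow> star_le a (a - b))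
    \<and> (star_le a b \<longrightarrow> star_le (b - a) b \<and> star_orth (b - a) a)
    \<and> (star_orth a b \<longrightarrow>
         (\<forall>d. (star_le d a \<and> star_le d b) \<longleftrightarrow> d = 0)
         \<and> star_le a (a + b) \<and> star_le b (a + b))
    \<and> (star_orth a b \<and> star_orth (a + b) c \<longrightarrow> star_orth a (b + c))"
proof (intro conjI impI)
  show "star_orth a a \<Longrightarrow> a = 0" by (rule star_orth_self_imp_zero)
  show "star_orth a b = star_orth b a" "star_orth b a = star_orth a (- b)"
    by (simp_all add: star_orth_commute)
  show "star_orth a b \<and> star_le c a \<Longrightarrow> star_orth c b" using star_orth_le_left by blast
  show "star_orth a b = star_le a (a - b)" by (rule star_orth_iff_le_diff)
  show "star_le a b \<Longrightarrow> star_le (b - a) b" by (rule star_le_diff_left)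
  show "star_le a b \<Longrightarrow> star_orth (b - a) a" by (rule star_orth_diff_left)
  show "star_orth a b \<Longrightarrow> \<forall>d. (star_le d a \<and> star_le d b) \<longleftrightarrow> d = 0"
    using star_orth_common_lower_bound star_le_zero by blast
  show "star_orth a b \<Longrightarrow> star_le a (a + b)" by (rule star_le_add_left)
  show "star_orth a b \<Longrightarrow> star_le b (a + b)" by (rule star_le_add_right)
  show "star_orth a b \<and> star_orth (a + b) c \<Longrightarrow> star_orth a (b + c)"
    using star_orth_add_right by blast
qed

end
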